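(* Let $k\ge 2$ and $n>2^k$ be integers and put $c=2^k-2$. Let $h,w$ be the positive integers such that $$h(n-1)-wc=\begin{cases}1 & \text{if } \gcd(c,n-1)=1,\\ 0 & \text{otherwise,}\end{cases}$$ with $0<w\le n-2$ minimal. Then the value of the search game on the path $\{0,\dots,n-1\}$ with budget $k$, i.e. $$\max_{x\in\Delta_k}\ \min_{v\in V}\ \sum_{T\in\mathcal{T}_k:\, v\in C(T)} x_T \;=\; \min_{y\in\Delta_V}\ \max_{T\in\mathcal{T}_k}\ \sum_{v\in C(T)} y_v,$$ equals $\frac{h}{w}$. Moreover, the output $x$ of the Greedy Algorithm is an optimal strategy for the seeker; if $\gcd(c,n-1)=d>1$ the hider strategy $y^{\mathrm{nc}}$ is an optimal strategy for the hider, and if $\gcd(c,n-1)=1$ the hider strategy $y^{\mathrm{cp}}$ is an optimal strategy for the hider.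
   Context: Let $G$ be the path graph with vertex set $V=\{0,1,\dots,n-1\}$ and edges $\{v,v+1\}$, $0\le v\le n-2$. A search strategy for a tree $H$ is a rooted binary tree $T$ defined recursively: a single node is a search strategy for any tree $H$; otherwise the root $\rho$ is labeled with an edge $e(\rho)=uv$ of $H$ and has two children whose subtrees are search strategies for the components $H_u,H_v$ of $H-e(\rho)$ containing $u$ and $v$. Each node $\nu$ of $T$ gets a vertex set $V(\nu)$: the root gets $V(H)$, and if the root is labeled $uv$ its two children get $V(H_u)$ and $V(H_v)$, recursively. A vertex $v$ is covered by $T$ if $V(\lambda)=\{v\}$ for some leaf $\lambda$; $C(T)$ is the set of covered vertices. The height of $T$ is the maximal number of edges on a root-to-leaf path; $\mathcal{T}_k$ is the set of search strategies for $G$ of height at most $k$. $\Delta_k$ is the set of probability distributions $x=(x_T)_{T\in\mathcal{T}_k}$ and $\Delta_V$ the set of probability distributions $y=(y_v)_{v\in V}$. Intervals: for integers $u$, $\ell$ and $r\ge1$, $[u\oplus\ell]_r=\{w \bmod r: u\le w\le u+\ell-1\}$ (empty if $\ell\le 0$); the subscript is omitted when $r=n$. For every $v\in V\setminus\{1\}$ there is a strategy $T_v\in\mathcal{T}_k$ with $C(T_v)=[v\oplus(c+1)]$ if $\{0,n-1\}\cap[v\oplus(c+1)]\neq\emptyset$ and $C(T_v)=[v\oplus c]$ otherwise; fix such $T_v$. Greedy Algorithm: set $v=c+1$ and $\mathcal{X}=\{T_0\}$; while $v\notin\{0,1\}$: add $T_v$ to $\mathcal{X}$ and set $v=(v+c)\bmod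 (n-1)$. Output $x_T=1/|\mathcal{X}|$ for $T\in\mathcal{X}$ and $x_T=0$ otherwise. Hider strategy $y^{\mathrm{nc}}$ (case $d=\gcd(c,n-1)>1$, $w=(n-1)/d$): $y_v=0$ if $v$ is a multiple of $d$ and $y_v=\frac{1}{w(d-1)}$ otherwise. Hider strategy $y^{\mathrm{cp}}$ (case $\gcd(c,n-1)=1$): let $g(v)=v\frac{h}{wc}$ and $r=\lfloor c/h\rfloor$. Set $y_0=y_{n-1}=0$. Starting at $v=1$, repeatedly: choose the largest $r^*\in\{r,r+1\}$ with $g(v+r^*-1)\le \sum_{i=1}^{v-1}y_i+\frac1w$, set $y_i=\frac{1}{r^*w}$ for $i\in\{v,\dots,v+r^*-1\}$ (this block is called a segment), and replace $v$ by $v+r^*$; stop once $v>n-2$. *)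

theory Defs
  imports Complex_Main
begin

text \<open>Every component arising when edges of a path are deleted is a subpath, i.e. an
interval [a..b]. A strategy is a leaf or a node labelled with the edge {e, e+1};
its left child is a strategy for [a..e], its right child for [e+1..b].\<close>

datatype strat = Leaf | Node nat strat strat

fun valid :: "nat \<Rightarrow> nat \<Rightarrow> strat \<Rightarrow> bool" where
  "valid a b Leaf = True"
| "valid a b (Node e l r) = (a \<le> e \<and> e < b \<and> valid a e l \<and> valid (Suc e) b r)"

text \<open>covered vertices: leaves whose vertex set is a singleton\<close>
fun covered :: "nat \<Rightarrow> nat \<Rightarrow> strat \<Rightarrow> nat set" where
  "covered a b Leaf = (if a = b then {a} else {})"
| "covered a b (Node e l r) = covered a e l \<union> covered (Suc e) b r"

fun height :: "strat \<Rightarrow> nat" where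
  "height Leaf = 0"
| "height (Node e l r) = Suc (max (height l) (height r))"

definition strategies :: "nat \<Rightarrow> nat \<Rightarrow> strat set" where
  "strategies n k = {T. valid 0 (n - 1) T \<and> height T \<le> k}"

definition C :: "nat \<Rightarrow> strat \<Rightarrow> nat set" where
  "C n T = covered 0 (n - 1) T"

definition seeker_dists :: "nat \<Rightarrow> nat \<Rightarrow> (strat \<Rightarrow> real) set" where
  "seeker_dists n k = {x. (\<forall>T\<in>strategies n k. 0 \<le> x T) \<and> (\<Sum>T\<in>strategies n k. x T) = 1}"

definition hider_dists :: "nat \<Rightarrow> (nat \<Rightarrow> real) set" where
  "hider_dists n = {y. (\<forall>v<n. 0 \<le> y v) \<and> (\<Sum>v<n. y v) = 1}"

definition seeker_payoff :: "nat \<Rightarrow> nat \<Rightarrow> (strat \<Rightarrow> real) \<Rightarrow> nat \<Rightarrow> real" where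
  "seeker_payoff n k x v = (\<Sum>T\<in>{T\<in>strategies n k. v \<in> C n T}. x T)"

definition hider_payoff :: "nat \<Rightarrow> (nat \<Rightarrow> real) \<Rightarrow> strat \<Rightarrow> real" where
  "hider_payoff n y T = (\<Sum>v\<in>C n T. y v)"

definition lower_value :: "nat \<Rightarrow> nat \<Rightarrow> real" where
  "lower_value n k = (SUP x\<in>seeker_dists n k. Min (seeker_payoff n k x ` {..<n}))"

definition upper_value :: "nat \<Rightarrow> nat \<Rightarrow> real" where
  "upper_value n k = (INF y\<in>hider_dists n. Max (hider_payoff n y ` strategies n k))"

definition intv :: "nat \<Rightarrow> nat \<Rightarrow> nat \<Rightarrow> nat set" where
  "intv u l r = {w mod r | w. u \<le> w \<and> w < u + l}"

definition cover_target :: "nat \<Rightarrow> nat \<Rightarrow> nat \<Rightarrow> nat set" where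
  "cover_target n c v =
     (if {0, n - 1} \<inter> intv v (c + 1) n \<noteq> {} then intv v (c + 1) n else intv v c n)"

definition greedy_v :: "nat \<Rightarrow> nat \<Rightarrow> nat \<Rightarrow> nat" where
  "greedy_v n c j = ((\<lambda>v. (v + c) mod (n - 1)) ^^ j) (c + 1)"

definition greedy_stop :: "nat \<Rightarrow> nat \<Rightarrow> nat" where
  "greedy_stop n c = (LEAST j. greedy_v n c j \<in> {0, 1})"

definition greedy_set :: "nat \<Rightarrow> nat \<Rightarrow> (nat \<Rightarrow> strat) \<Rightarrow> strat set" where
  "greedy_set n c Tv = insert (Tv 0) {Tv (greedy_v n c j) | j. j < greedy_stop n c}"

definition greedy_x :: "nat \<Rightarrow> nat \<Rightarrow> (nat \<Rightarrow> strat) \<Rightarrow> strat \<Rightarrow> real" where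
  "greedy_x n c Tv T = (if T \<in> greedy_set n c Tv then 1 / real (card (greedy_set n c Tv)) else 0)"

definition y_nc :: "nat \<Rightarrow> nat \<Rightarrow> nat \<Rightarrow> real" where
  "y_nc n c v = (let d = gcd c (n - 1); w = (n - 1) div d in
                 if d dvd v then 0 else 1 / (real w * real (d - 1)))"

text \<open>One round of the segment construction; state = (current y, current v).
 The largest r* in {r, r+1} satisfying the condition is taken (r is used if r+1 fails).\<close>
definition cp_step :: "nat \<Rightarrow> nat \<Rightarrow> nat \<Rightarrow> nat \<Rightarrow> (nat \<Rightarrow> real) \<times> nat \<Rightarrow> (nat \<Rightarrow> real) \<times> nat" where
  "cp_step n c h w = (\<lambda>(y, v).
     if v > n - 2 then (y, v) else
     (let g = (\<lambda>u::nat. real u * (real h / (real w * real c)));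
          r = nat \<lfloor>real c / real h\<rfloor>;
          S = (\<Sum>i\<in>{1..<v}. y i);
          rs = (if g (v + (r + 1) - 1) \<le> S + 1 / real w then r + 1 else r)
      in ((\<lambda>i. if v \<le> i \<and> i < v + rs then 1 / (real rs * real w) else y i), v + rs)))"

text \<open>start with y = 0 (in particular y_0 = y_{n-1} = 0) and v = 1; n rounds suffice
 since each round advances v by r* >= 1 and stopped states are fixed points.\<close>
definition y_cp :: "nat \<Rightarrow> nat \<Rightarrow> nat \<Rightarrow> nat \<Rightarrow> nat \<Rightarrow> real" where
  "y_cp n c h w = fst ((cp_step n c h w ^^ n) (\<lambda>_. 0, 1))"

end

theory Submission
  imports Defs
begin

text \<open>
  Seeker: the greedy algorithm picks w strategies; unrolling the cycle of residues modulo
  n - 1, the j-th of them covers the residues of the integers in {j c<..(j + 1) c}.  The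
  integers 1, ..., w c + e (e = 1 in the coprime case, e = 0 otherwise) wind h times around
  the cycle, so every vertex is covered by at least h of the w strategies and the uniform
  mixture guarantees h / w.

  Hider: a strategy of height k cuts at most 2^k - 1 = c + 1 edges, and it isolates an
  interior vertex only by cutting both of its edges.  Peeling off the maximal runs of the
  covered interior vertices bounds the hider's mass on them by G c, for any G such that
  G l bounds the mass of l consecutive vertices and G l1 + G l2 \<le> G (l1 + l2 + 1).  For
  y_nc, G l counts the non-multiples of d among l consecutive integers; for y_cp, G is the
  prefix mass of the segment weights, whose near additivity is inherited from that of
  m \<mapsto> \<lfloor>m c / h\<rfloor>.  In both cases the bound comes out as h / w, and weak duality
  shows that h / w is the value of the game.
\<close>

section \<open>Cut edges of a search strategy\<close>

fun cut_edges :: "strat \<Rightarrow> nat set" where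
  "cut_edges Leaf = {}"
| "cut_edges (Node e l r) = insert e (cut_edges l \<union> cut_edges r)"

lemma finite_cut_edges: "finite (cut_edges T)"
  by (induction T) auto

lemma card_cut_edges_le: "card (cut_edges T) \<le> 2 ^ height T - 1"
proof (induction T)
  case Leaf
  then show ?case by simp
next
  case (Node e l r)
  let ?m = "max (height l) (height r)"
  have "card (cut_edges (Node e l r)) \<le> Suc (card (cut_edges l \<union> cut_edges r))"
    by (simp add: card_insert_if finite_cut_edges)
  also have "\<dots> \<le> Suc (card (cut_edges l) + card (cut_edges r))"
    using card_Un_le by simp
  also have "\<dots> \<le> 2 ^ Suc ?m - 1"
  proof -
    have "(2::nat) ^ height l \<le> 2 ^ ?m" "(2::nat) ^ height r \<le> 2 ^ ?m"
      by (simp_all add: power_increasing)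
    moreover have "(1::nat) \<le> 2 ^ height l" "(1::nat) \<le> 2 ^ height r"
      by simp_all
    moreover have "(2::nat) ^ Suc ?m = 2 * 2 ^ ?m" by simp
    ultimately show ?thesis using Node.IH by linarith
  qed
  finally show ?case by simp
qed

lemma valid_cut_edges_subset: "valid a b T \<Longrightarrow> cut_edges T \<subseteq> {a..<b}"
  by (induction a b T rule: valid.induct) auto

lemma covered_imp_cut_edges:
  assumes "valid a b T" "v \<in> covered a b T"
  shows "a \<le> v \<and> v \<le> b \<and> (a < v \<longrightarrow> v - 1 \<in> cut_edges T) \<and> (v < b \<longrightarrow> v \<in> cut_edges T)"
  using assms
proof (induction a b T arbitrary: v rule: valid.induct)
  case (1 a b)
  then show ?case by (auto split: if_splits)
next
  case (2 a b e l r)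
  show ?case
  proof (cases "v \<in> covered a e l")
    case True
    with 2 have "a \<le> v \<and> v \<le> e \<and> (a < v \<longrightarrow> v - 1 \<in> cut_edges l)
        \<and> (v < e \<longrightarrow> v \<in> cut_edges l)"
      by auto
    with 2 show ?thesis by (cases "v = e") auto
  next
    case False
    with 2 have "v \<in> covered (Suc e) b r" by auto
    with 2 have "Suc e \<le> v \<and> v \<le> b \<and> (Suc e < v \<longrightarrow> v - 1 \<in> cut_edges r)
        \<and> (v < b \<longrightarrow> v \<in> cut_edges r)"
      by auto
    with 2 show ?thesis by (cases "v = Suc e") auto
  qed
qed

lemma C_subset_vertices:
  assumes "T \<in> strategies n k" "0 < n"
  shows "C n T \<subseteq> {..<n}"
proof
  fix v assume "v \<in> C n T"
  then have "v \<le> n - 1"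
    using covered_imp_cut_edges[of 0 "n - 1" T v] assms(1) unfolding strategies_def C_def by simp
  then show "v \<in> {..<n}" using assms(2) by simp
qed

text \<open>Edge {e, e + 1} is named e, as in the labels of strat.\<close>

definition incident_edges :: "nat set \<Rightarrow> nat set" where
  "incident_edges S = S \<union> (\<lambda>v. v - 1) ` S"

lemma card_incident_edges_le:
  assumes T: "T \<in> strategies n k" and "S \<subseteq> C n T" and "S \<subseteq> {1..n-2}"
  shows "card (incident_edges S) \<le> 2 ^ k - 1"
proof -
  have "incident_edges S \<subseteq> cut_edges T"
  proof
    fix x assume "x \<in> incident_edges S"
    then obtain v where v: "v \<in> S" and x: "x = v \<or> x = v - 1"
      unfolding incident_edges_def by auto
    have "v \<in> covered 0 (n - 1) T" using v assms(2) unfolding C_def by auto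
    then show "x \<in> cut_edges T"
      using covered_imp_cut_edges[of 0 "n - 1" T v] T v x assms(3)
      unfolding strategies_def by force
  qed
  then have "card (incident_edges S) \<le> card (cut_edges T)"
    by (simp add: card_mono finite_cut_edges)
  also have "\<dots> \<le> 2 ^ height T - 1" by (rule card_cut_edges_le)
  also have "\<dots> \<le> 2 ^ k - 1"
    using T unfolding strategies_def by (simp add: diff_le_mono power_increasing)
  finally show ?thesis .
qed

lemma finite_bounded_trees:
  assumes "finite A"
  shows "finite {T. height T \<le> k \<and> cut_edges T \<subseteq> A}"
proof (induction k)
  case 0
  have "{T. height T \<le> 0 \<and> cut_edges T \<subseteq> A} \<subseteq> {Leaf}"
    by (auto elim: height.elims)
  then show ?case by (rule finite_subset) simp
next
  case (Suc k)
  let ?B = "{T. height T \<le> k \<and> cut_edges T \<subseteq> A}"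
  have "{T. height T \<le> Suc k \<and> cut_edges T \<subseteq> A}
      \<subseteq> insert Leaf ((\<lambda>(e, l, r). Node e l r) ` (A \<times> ?B \<times> ?B))"
  proof
    fix T assume T_in: "T \<in> {T. height T \<le> Suc k \<and> cut_edges T \<subseteq> A}"
    then show "T \<in> insert Leaf ((\<lambda>(e, l, r). Node e l r) ` (A \<times> ?B \<times> ?B))"
    proof (cases T)
      case (Node e l r)
      with T_in have "(e, l, r) \<in> A \<times> ?B \<times> ?B" by auto
      then show ?thesis unfolding Node by (auto intro: image_eqI[where x = "(e, l, r)"])
    qed simp
  qed
  then show ?case using Suc assms by (auto intro: finite_subset)
qed

lemma finite_strategies: "finite (strategies n k)"
proof (rule finite_subset)
  show "strategies n k \<subseteq> {T. height T \<le> k \<and> cut_edges T \<subseteq> {..<n}}"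
    unfolding strategies_def using valid_cut_edges_subset by fastforce
qed (simp add: finite_bounded_trees)

lemma Leaf_in_strategies: "Leaf \<in> strategies n k"
  unfolding strategies_def by simp

section \<open>Mass of a set of vertices with few incident edges\<close>

lemma incident_edges_Un: "incident_edges (A \<union> B) = incident_edges A \<union> incident_edges B"
  unfolding incident_edges_def by auto

lemma incident_edges_atLeastAtMost:
  assumes "1 \<le> a" "a \<le> b"
  shows "incident_edges {a..b} = {a - 1..b}"
  unfolding incident_edges_def
proof (intro equalityI subsetI)
  fix x assume "x \<in> {a - 1..b}"
  with assms show "x \<in> {a..b} \<union> (\<lambda>v. v - 1) ` {a..b}"
    by (cases "x = a - 1") (auto intro!: image_eqI[where x = a])
qed auto

lemma finite_incident_edges: "finite S \<Longrightarrow> finite (incident_edges S)"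
  unfolding incident_edges_def by simp

lemma card_incident_edges_Un_run:
  assumes "finite S" "1 \<le> a" "a \<le> b" "\<forall>x\<in>S. x < a - 1"
  shows "card (incident_edges (S \<union> {a..b})) = card (incident_edges S) + (b - a + 2)"
proof -
  have "incident_edges S \<inter> {a - 1..b} = {}"
    using assms(4) less_imp_diff_less unfolding incident_edges_def by fastforce
  moreover have "incident_edges (S \<union> {a..b}) = incident_edges S \<union> {a - 1..b}"
    using incident_edges_Un incident_edges_atLeastAtMost[OF assms(2,3)] by simp
  ultimately show ?thesis
    using finite_incident_edges[OF assms(1)] assms(2,3) by (simp add: card_Un_disjoint)
qed

lemma obtain_last_run:
  fixes S :: "nat set"
  assumes "finite S" "S \<noteq> {}" "0 \<notin> S"
  obtains a b where "1 \<le> a" "a \<le> b" "{a..b} \<subseteq> S" "\<forall>x\<in>S - {a..b}. x < a - 1"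
proof -
  define b where "b = Max S"
  have b: "b \<in> S" "\<forall>x\<in>S. x \<le> b" using assms b_def by simp_all
  define a where "a = (LEAST a. {a..b} \<subseteq> S)"
  have ab: "{a..b} \<subseteq> S" using LeastI[of "\<lambda>a. {a..b} \<subseteq> S" b] b a_def by simp
  have a_least: "a \<le> a'" if "{a'..b} \<subseteq> S" for a'
    using that a_def by (simp add: Least_le)
  have "a \<le> b" using a_least[of b] b by simp
  then have "a \<in> S" using ab by auto
  then have a1: "1 \<le> a" using assms(3) by (cases a) auto
  have "a - 1 \<notin> S"
  proof
    assume "a - 1 \<in> S"
    have "{a - 1..b} \<subseteq> S"
    proof
      fix x assume "x \<in> {a - 1..b}"
      then show "x \<in> S" using ab \<open>a - 1 \<in> S\<close> by (cases "x = a - 1") auto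
    qed
    then show False using a_least[of "a - 1"] a1 by simp
  qed
  have "x < a - 1" if "x \<in> S - {a..b}" for x
  proof -
    have "x < a" using that b(2) by auto
    moreover have "x \<noteq> a - 1" using that \<open>a - 1 \<notin> S\<close> by auto
    ultimately show ?thesis by linarith
  qed
  then show ?thesis using a1 \<open>a \<le> b\<close> ab by (intro that) auto
qed

locale window_bound =
  fixes Y G :: "nat \<Rightarrow> real"
  assumes Y_nonneg: "\<And>u. 0 \<le> Y u"
    and window_le: "\<And>a l. (\<Sum>u\<in>{a<..a + l}. Y u) \<le> G l"
    and G_superadd: "\<And>l1 l2. G l1 + G l2 \<le> G (l1 + l2 + 1)"
begin

lemma G_nonneg: "0 \<le> G l"
  using window_le[of 0 l] sum_nonneg[of "{0<..l}" Y] Y_nonneg by simp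

lemma G_mono: "l \<le> l' \<Longrightarrow> G l \<le> G l'"
proof (cases "l = l'")
  case False
  moreover assume "l \<le> l'"
  ultimately have "l' = l + (l' - l - 1) + 1" by simp
  then have "G l + G (l' - l - 1) \<le> G l'" using G_superadd[of l "l' - l - 1"] by simp
  then show ?thesis using G_nonneg[of "l' - l - 1"] by simp
qed simp

lemma sum_atLeastAtMost_le_G:
  assumes "1 \<le> a" "a \<le> b"
  shows "sum Y {a..b} \<le> G (b - a + 1)"
proof -
  have "{a..b} = {a - 1<..(a - 1) + (b - a + 1)}" using assms by auto
  then show ?thesis using window_le[of "a - 1" "b - a + 1"] by simp
qed

text \<open>Peel off the last maximal run {a..b} of S: it has b - a + 2 incident edges,
  none shared with the rest of S, and carries mass at most G (b - a + 1).\<close>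

lemma sum_le_G_card_incident_edges:
  "finite S \<Longrightarrow> S \<noteq> {} \<Longrightarrow> 0 \<notin> S \<Longrightarrow> sum Y S \<le> G (card (incident_edges S) - 1)"
proof (induction "card S" arbitrary: S rule: less_induct)
  case less
  obtain a b where a1: "1 \<le> a" and ab: "a \<le> b" and run: "{a..b} \<subseteq> S"
    and rest: "\<forall>x\<in>S - {a..b}. x < a - 1"
    using obtain_last_run[OF less.prems] .
  define S0 where "S0 = S - {a..b}"
  have S0: "finite S0" "0 \<notin> S0" "S = S0 \<union> {a..b}" "S0 \<inter> {a..b} = {}"
    using less.prems run unfolding S0_def by auto
  have "\<forall>x\<in>S0. x < a - 1" using rest unfolding S0_def by blast
  then have card_eq: "card (incident_edges S) = card (incident_edges S0) + (b - a + 2)"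
    using card_incident_edges_Un_run[OF S0(1) a1 ab] S0(3) by simp
  have sum_eq: "sum Y S = sum Y S0 + sum Y {a..b}"
    using S0 by (simp add: sum.union_disjoint)
  have run_le: "sum Y {a..b} \<le> G (b - a + 1)"
    using sum_atLeastAtMost_le_G[OF a1 ab] .
  show ?case
  proof (cases "S0 = {}")
    case True
    then show ?thesis using card_eq sum_eq run_le by (simp add: incident_edges_def)
  next
    case False
    have "a \<in> S" "a \<notin> S0" using run ab unfolding S0_def by auto
    then have "S0 \<subset> S" unfolding S0_def by blast
    then have "card S0 < card S" using less.prems(1) by (rule psubset_card_mono[rotated])
    then have IH: "sum Y S0 \<le> G (card (incident_edges S0) - 1)"
      using less.hyps S0 False by blast
    have "incident_edges S0 \<noteq> {}" using False unfolding incident_edges_def by simp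
    then have "1 \<le> card (incident_edges S0)"
      using finite_incident_edges[OF S0(1)] by (simp add: Suc_leI card_gt_0_iff)
    then have "card (incident_edges S) - 1 = (card (incident_edges S0) - 1) + (b - a + 1) + 1"
      using card_eq by simp
    then show ?thesis
      using G_superadd[of "card (incident_edges S0) - 1" "b - a + 1"] IH sum_eq run_le by simp
  qed
qed

lemma sum_le_G:
  assumes "finite S" "0 \<notin> S" "card (incident_edges S) \<le> B + 1"
  shows "sum Y S \<le> G B"
proof (cases "S = {}")
  case True
  then show ?thesis using G_nonneg by simp
next
  case False
  have "card (incident_edges S) - 1 \<le> B" using assms(3) by simp
  then show ?thesis
    using sum_le_G_card_incident_edges[OF assms(1) False assms(2)] G_mono by fastforce
qed

lemma hider_payoff_le:
  assumes W: "0 < W"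
    and y_out: "\<And>v. v < n \<Longrightarrow> \<not> (1 \<le> v \<and> v \<le> n - 2) \<Longrightarrow> y v = 0"
    and y_in: "\<And>v. 1 \<le> v \<Longrightarrow> v \<le> n - 2 \<Longrightarrow> y v = Y v / W"
    and T: "T \<in> strategies n k" and k: "2 ^ k - 1 \<le> B + 1" and n: "0 < n"
  shows "hider_payoff n y T \<le> G B / W"
proof -
  define S where "S = C n T \<inter> {1..n-2}"
  have CT: "C n T \<subseteq> {..<n}" using C_subset_vertices[OF T n] .
  have "hider_payoff n y T = (\<Sum>v\<in>C n T. if v \<in> {1..n-2} then y v else 0)"
    unfolding hider_payoff_def using CT y_out by (intro sum.cong) auto
  also have "\<dots> = (\<Sum>v\<in>S. y v)"
    unfolding S_def by (rule sum.inter_restrict[symmetric]) (use CT finite_subset in auto)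
  also have "\<dots> = (\<Sum>v\<in>S. Y v) / W"
    unfolding S_def using y_in by (simp add: sum_divide_distrib)
  finally have payoff: "hider_payoff n y T = (\<Sum>v\<in>S. Y v) / W" .
  have "card (incident_edges S) \<le> B + 1"
    using card_incident_edges_le[OF T, of S] k unfolding S_def by auto
  then have "(\<Sum>v\<in>S. Y v) \<le> G B" by (intro sum_le_G) (auto simp: S_def)
  then show ?thesis unfolding payoff using W by (simp add: divide_right_mono)
qed

end

section \<open>Segment weights\<close>

lemma div_add_bounds:
  fixes x y p :: nat
  assumes "0 < p"
  shows "x div p + y div p \<le> (x + y) div p" and "(x + y) div p \<le> x div p + y div p + 1"
proof -
  have split: "(x + y) div p = x div p + y div p + (x mod p + y mod p) div p"
    by (rule div_add1_eq)
  have "x mod p + y mod p < 2 * p"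
    using mod_less_divisor[OF assms, of x] mod_less_divisor[OF assms, of y] by linarith
  then have "(x mod p + y mod p) div p < 2" by (rule less_mult_imp_div_less)
  with split show "x div p + y div p \<le> (x + y) div p" "(x + y) div p \<le> x div p + y div p + 1"
    by linarith+
qed

lemma convex_comb3_bounds:
  fixes \<alpha> \<beta> \<gamma> P1 P2 P3 Q1 Q2 Q3 :: real
  assumes "0 \<le> \<alpha>" "0 \<le> \<beta>" "0 \<le> \<gamma>" "\<alpha> + \<beta> + \<gamma> = 1"
    and "P1 \<le> Q1" "Q1 \<le> P1 + 1" "P2 \<le> Q2" "Q2 \<le> P2 + 1" "P3 \<le> Q3" "Q3 \<le> P3 + 1"
  shows "\<alpha> * P1 + \<beta> * P2 + \<gamma> * P3 \<le> \<alpha> * Q1 + \<beta> * Q2 + \<gamma> * Q3"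
    and "\<alpha> * Q1 + \<beta> * Q2 + \<gamma> * Q3 \<le> \<alpha> * P1 + \<beta> * P2 + \<gamma> * P3 + 1"
proof -
  have "\<alpha> * P1 \<le> \<alpha> * Q1" "\<beta> * P2 \<le> \<beta> * Q2" "\<gamma> * P3 \<le> \<gamma> * Q3"
    using assms by (simp_all add: mult_left_mono)
  then show "\<alpha> * P1 + \<beta> * P2 + \<gamma> * P3 \<le> \<alpha> * Q1 + \<beta> * Q2 + \<gamma> * Q3" by linarith
  have "\<alpha> * Q1 \<le> \<alpha> * (P1 + 1)" "\<beta> * Q2 \<le> \<beta> * (P2 + 1)" "\<gamma> * Q3 \<le> \<gamma> * (P3 + 1)"
    using assms by (simp_all add: mult_left_mono)
  moreover have "\<alpha> * (P1 + 1) + \<beta> * (P2 + 1) + \<gamma> * (P3 + 1) = \<alpha> * P1 + \<beta> * P2 + \<gamma> * P3 + 1"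
    using assms(4) by (simp add: algebra_simps)
  ultimately show "\<alpha> * Q1 + \<beta> * Q2 + \<gamma> * Q3 \<le> \<alpha> * P1 + \<beta> * P2 + \<gamma> * P3 + 1"
    by linarith
qed

text \<open>Segment m is {seg_end m<..seg_end (Suc m)} and its vertices share mass 1.  The
  piecewise linear map interp inverts prefix and inherits the near additivity of seg_end;
  through it, prefix becomes subadditive, and superadditive up to one vertex.\<close>

locale segments =
  fixes p q :: nat
  assumes p_pos: "0 < p" and p_le_q: "p \<le> q"
begin

definition seg_end :: "nat \<Rightarrow> nat" where
  "seg_end m = m * q div p"

definition seg_len :: "nat \<Rightarrow> nat" where
  "seg_len m = seg_end (Suc m) - seg_end m"

definition seg_of :: "nat \<Rightarrow> nat" where
  "seg_of u = (u * p - 1) div q"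

definition weight :: "nat \<Rightarrow> real" where
  "weight u = 1 / real (seg_len (seg_of u))"

definition prefix :: "nat \<Rightarrow> real" where
  "prefix i = (\<Sum>u\<in>{0<..i}. weight u)"

definition interp :: "real \<Rightarrow> real" where
  "interp x = real (seg_end (nat \<lfloor>x\<rfloor>)) + frac x * real (seg_len (nat \<lfloor>x\<rfloor>))"

lemma seg_end_add:
  "real (seg_end a) + real (seg_end b) \<le> real (seg_end (a + b))"
  "real (seg_end (a + b)) \<le> real (seg_end a) + real (seg_end b) + 1"
  unfolding seg_end_def of_nat_add[symmetric] of_nat_le_iff
  using div_add_bounds[OF p_pos, of "a * q" "b * q"] by (simp_all add: add_mult_distrib)

lemma seg_end_0 [simp]: "seg_end 0 = 0"
  unfolding seg_end_def by simp

lemma seg_end_mono: "a \<le> b \<Longrightarrow> seg_end a \<le> seg_end b"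
  unfolding seg_end_def by (simp add: div_le_mono)

lemma seg_len_ge_1: "1 \<le> seg_len m"
proof -
  have "1 \<le> seg_end 1"
    unfolding seg_end_def using div_le_mono[OF p_le_q, of p] p_pos by simp
  then show ?thesis
    using seg_end_add(1)[of m 1] unfolding seg_len_def by simp
qed

lemma seg_end_Suc: "seg_end (Suc m) = seg_end m + seg_len m"
  unfolding seg_len_def using seg_end_mono[of m "Suc m"] by simp

lemma seg_of_eq:
  assumes "seg_end m < u" "u \<le> seg_end (Suc m)"
  shows "seg_of u = m"
proof -
  have q: "0 < q" using p_pos p_le_q by simp
  have "m * q < u * p"
    using assms(1) p_pos unfolding seg_end_def by (simp add: div_less_iff_less_mult mult.commute)
  then have "m \<le> (u * p - 1) div q"
    using q by (simp add: less_eq_div_iff_mult_less_eq)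
  moreover have "u * p \<le> Suc m * q"
    using assms(2) p_pos unfolding seg_end_def by (simp add: less_eq_div_iff_mult_less_eq mult.commute)
  then have "(u * p - 1) div q < Suc m"
    using q assms(1) p_pos by (simp add: div_less_iff_less_mult)
  ultimately show ?thesis unfolding seg_of_def by simp
qed

lemma seg_of_bounds:
  assumes "0 < u"
  shows "seg_end (seg_of u) < u" and "u \<le> seg_end (Suc (seg_of u))"
proof -
  have q: "0 < q" using p_pos p_le_q by simp
  let ?m = "seg_of u"
  have lo: "?m * q \<le> u * p - 1"
    unfolding seg_of_def by (rule div_times_less_eq_dividend)
  have hi: "u * p - 1 < Suc ?m * q"
    unfolding seg_of_def using dividend_less_div_times[OF q, of "u * p - 1"] by simp
  have "0 < u * p" using assms p_pos by simp
  with lo have "?m * q < u * p" by linarith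
  then show "seg_end ?m < u"
    unfolding seg_end_def using p_pos by (simp add: div_less_iff_less_mult mult.commute)
  from hi \<open>0 < u * p\<close> have "u * p \<le> Suc ?m * q" by linarith
  then show "u \<le> seg_end (Suc ?m)"
    unfolding seg_end_def using p_pos by (simp add: less_eq_div_iff_mult_less_eq mult.commute)
qed

lemma prefix_Suc: "prefix (Suc i) = prefix i + weight (Suc i)"
proof -
  have "{0<..Suc i} = insert (Suc i) {0<..i}" by auto
  then show ?thesis unfolding prefix_def by simp
qed

lemma prefix_within_segment:
  assumes "prefix (seg_end m) = real m" "t \<le> seg_len m"
  shows "prefix (seg_end m + t) = real m + real t / real (seg_len m)"
  using assms(2)
proof (induction t)
  case 0
  then show ?case using assms(1) by simp
next
  case (Suc t)
  have "seg_of (seg_end m + Suc t) = m"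
    using Suc.prems seg_end_Suc[of m] by (intro seg_of_eq) auto
  then have "weight (seg_end m + Suc t) = 1 / real (seg_len m)"
    unfolding weight_def by simp
  then show ?case
    using Suc prefix_Suc[of "seg_end m + t"] by (simp add: add_divide_distrib)
qed

lemma prefix_seg_end: "prefix (seg_end m) = real m"
proof (induction m)
  case (Suc m)
  then show ?case
    using prefix_within_segment[of m "seg_len m"] seg_end_Suc[of m] seg_len_ge_1[of m] by simp
qed (simp add: prefix_def)

lemma prefix_seg_end_plus:
  "t \<le> seg_len m \<Longrightarrow> prefix (seg_end m + t) = real m + real t / real (seg_len m)"
  using prefix_within_segment[OF prefix_seg_end] .

lemma prefix_q: "prefix q = real p"
proof -
  have "seg_end p = q" unfolding seg_end_def using p_pos by simp
  then show ?thesis using prefix_seg_end[of p] by simp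
qed

lemma prefix_nonneg: "0 \<le> prefix i"
  unfolding prefix_def weight_def by (simp add: sum_nonneg)

lemma interp_eq:
  assumes "0 \<le> \<theta>" "\<theta> < 1"
  shows "interp (real m + \<theta>) = real (seg_end m) + \<theta> * real (seg_len m)"
proof -
  have "\<lfloor>real m + \<theta>\<rfloor> = int m" using assms by (simp add: floor_eq_iff)
  then show ?thesis unfolding interp_def frac_def by simp
qed

lemma interp_eq_convex:
  assumes "0 \<le> \<theta>" "\<theta> < 1"
  shows "interp (real m + \<theta>) = (1 - \<theta>) * real (seg_end m) + \<theta> * real (seg_end (Suc m))"
  unfolding interp_eq[OF assms] seg_end_Suc by (simp add: algebra_simps)

lemma interp_prefix: "interp (prefix i) = real i"
proof -
  define m where "m = seg_of (Suc i)"
  have m: "seg_end m \<le> i" "i < seg_end (Suc m)"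
    using seg_of_bounds[of "Suc i"] unfolding m_def by auto
  define t where "t = i - seg_end m"
  have t: "t < seg_len m" "i = seg_end m + t"
    using m seg_end_Suc[of m] unfolding t_def by auto
  have "prefix i = real m + real t / real (seg_len m)"
    using prefix_seg_end_plus[of t m] t by simp
  moreover have "real t / real (seg_len m) < 1"
    using t(1) seg_len_ge_1[of m] by simp
  ultimately have "interp (prefix i) = real (seg_end m) + real t"
    using interp_eq[of "real t / real (seg_len m)" m] seg_len_ge_1[of m] by simp
  then show ?thesis using t(2) by simp
qed

lemma interp_add_no_carry:
  fixes m1 m2 :: nat and \<theta>1 \<theta>2 :: real
  assumes "0 \<le> \<theta>1" "0 \<le> \<theta>2" "\<theta>1 + \<theta>2 < 1"
  defines "x \<equiv> real m1 + \<theta>1" and "y \<equiv> real m2 + \<theta>2"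
  shows "interp x + interp y \<le> interp (x + y)" and "interp (x + y) \<le> interp x + interp y + 1"
proof -
  define M where "M = m1 + m2"
  define \<alpha> where "\<alpha> = 1 - \<theta>1 - \<theta>2"
  have "x + y = real M + (\<theta>1 + \<theta>2)" unfolding x_def y_def M_def by simp
  then have "interp (x + y) = \<alpha> * real (seg_end M) + \<theta>1 * real (seg_end (Suc M))
      + \<theta>2 * real (seg_end (Suc M))"
    using interp_eq_convex[of "\<theta>1 + \<theta>2" M] assms unfolding \<alpha>_def by (simp add: algebra_simps)
  moreover have "interp x + interp y = \<alpha> * (real (seg_end m1) + real (seg_end m2))
      + \<theta>1 * (real (seg_end (Suc m1)) + real (seg_end m2))
      + \<theta>2 * (real (seg_end m1) + real (seg_end (Suc m2)))"
    using interp_eq_convex[of \<theta>1 m1] interp_eq_convex[of \<theta>2 m2] assms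
    unfolding x_def y_def \<alpha>_def by (simp add: algebra_simps)
  moreover note convex_comb3_bounds[of \<alpha> \<theta>1 \<theta>2, OF _ _ _ _
      seg_end_add[of m1 m2] seg_end_add[of "Suc m1" m2] seg_end_add[of m1 "Suc m2"]]
  ultimately show "interp x + interp y \<le> interp (x + y)" "interp (x + y) \<le> interp x + interp y + 1"
    using assms unfolding \<alpha>_def M_def by simp_all
qed

lemma interp_add_carry:
  fixes m1 m2 :: nat and \<theta>1 \<theta>2 :: real
  assumes "\<theta>1 < 1" "\<theta>2 < 1" "1 \<le> \<theta>1 + \<theta>2"
  defines "x \<equiv> real m1 + \<theta>1" and "y \<equiv> real m2 + \<theta>2"
  shows "interp x + interp y \<le> interp (x + y)" and "interp (x + y) \<le> interp x + interp y + 1"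
proof -
  define M where "M = Suc (m1 + m2)"
  define \<gamma> where "\<gamma> = \<theta>1 + \<theta>2 - 1"
  have \<gamma>: "0 \<le> \<gamma>" "\<gamma> < 1" using assms unfolding \<gamma>_def by auto
  have "x + y = real M + \<gamma>" unfolding x_def y_def M_def \<gamma>_def by simp
  then have "interp (x + y) = (1 - \<gamma>) * real (seg_end M) + \<gamma> * real (seg_end (Suc M))"
    using interp_eq_convex[OF \<gamma>] by simp
  also have "\<dots> = (1 - \<theta>1) * real (seg_end M) + (1 - \<theta>2) * real (seg_end M)
      + \<gamma> * real (seg_end (Suc M))"
    unfolding \<gamma>_def by (simp add: algebra_simps)
  finally have "interp (x + y) = \<dots>" .
  moreover have "interp x + interp y = (1 - \<theta>1) * (real (seg_end m1) + real (seg_end (Suc m2)))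
      + (1 - \<theta>2) * (real (seg_end (Suc m1)) + real (seg_end m2))
      + \<gamma> * (real (seg_end (Suc m1)) + real (seg_end (Suc m2)))"
    using interp_eq_convex[of \<theta>1 m1] interp_eq_convex[of \<theta>2 m2] assms
    unfolding x_def y_def \<gamma>_def by (simp add: algebra_simps)
  moreover note convex_comb3_bounds[of "1 - \<theta>1" "1 - \<theta>2" \<gamma>, OF _ _ _ _
      seg_end_add[of m1 "Suc m2"] seg_end_add[of "Suc m1" m2] seg_end_add[of "Suc m1" "Suc m2"]]
  ultimately show "interp x + interp y \<le> interp (x + y)" "interp (x + y) \<le> interp x + interp y + 1"
    using assms unfolding \<gamma>_def M_def by simp_all
qed

lemma obtain_nat_plus_frac:
  fixes x :: real
  assumes "0 \<le> x"
  obtains m \<theta> where "x = real m + \<theta>" "0 \<le> \<theta>" "\<theta> < 1"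
proof
  show "x = real (nat \<lfloor>x\<rfloor>) + frac x" using assms by (simp add: frac_def)
qed (simp_all add: frac_lt_1)

lemma interp_add:
  assumes "0 \<le> x" "0 \<le> y"
  shows "interp x + interp y \<le> interp (x + y)" and "interp (x + y) \<le> interp x + interp y + 1"
proof -
  obtain m1 \<theta>1 where x: "x = real m1 + \<theta>1" "0 \<le> \<theta>1" "\<theta>1 < 1"
    using obtain_nat_plus_frac[OF assms(1)] .
  obtain m2 \<theta>2 where y: "y = real m2 + \<theta>2" "0 \<le> \<theta>2" "\<theta>2 < 1"
    using obtain_nat_plus_frac[OF assms(2)] .
  have "interp x + interp y \<le> interp (x + y) \<and> interp (x + y) \<le> interp x + interp y + 1"
  proof (cases "\<theta>1 + \<theta>2 < 1")
    case True
    then show ?thesis using interp_add_no_carry[of \<theta>1 \<theta>2 m1 m2] x y by simp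
  next
    case False
    then show ?thesis using interp_add_carry[of \<theta>1 \<theta>2 m1 m2] x y by simp
  qed
  then show "interp x + interp y \<le> interp (x + y)" "interp (x + y) \<le> interp x + interp y + 1"
    by auto
qed

lemma interp_strict_mono:
  assumes "0 \<le> x" "x < y"
  shows "interp x < interp y"
proof -
  obtain m1 \<theta>1 where x: "x = real m1 + \<theta>1" "0 \<le> \<theta>1" "\<theta>1 < 1"
    using obtain_nat_plus_frac[OF assms(1)] .
  have "0 \<le> y" using assms by linarith
  then obtain m2 \<theta>2 where y: "y = real m2 + \<theta>2" "0 \<le> \<theta>2" "\<theta>2 < 1"
    by (rule obtain_nat_plus_frac)
  have ix: "interp x = real (seg_end m1) + \<theta>1 * real (seg_len m1)"
    using interp_eq[OF x(2,3)] x(1) by simp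
  have iy: "interp y = real (seg_end m2) + \<theta>2 * real (seg_len m2)"
    using interp_eq[OF y(2,3)] y(1) by simp
  have L: "1 \<le> real (seg_len m1)" using seg_len_ge_1 by simp
  show ?thesis
  proof (cases "m1 = m2")
    case True
    then have "\<theta>1 < \<theta>2" using x y assms by simp
    then show ?thesis using ix iy True L by simp
  next
    case False
    have "real m1 < real m2 + 1" using x y assms by linarith
    with False have "Suc m1 \<le> m2" by simp
    then have "seg_end m1 + seg_len m1 \<le> seg_end m2"
      using seg_end_mono seg_end_Suc[of m1] by metis
    then have "real (seg_end m1) + real (seg_len m1) \<le> real (seg_end m2)"
      by (simp only: of_nat_add[symmetric] of_nat_le_iff)
    moreover have "\<theta>1 * real (seg_len m1) < real (seg_len m1)" using x L by simp
    moreover have "0 \<le> \<theta>2 * real (seg_len m2)" using y by simp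
    ultimately show ?thesis using ix iy by linarith
  qed
qed

lemma prefix_subadd: "prefix (a + l) \<le> prefix a + prefix l"
proof (rule ccontr)
  assume "\<not> ?thesis"
  then have "interp (prefix a + prefix l) < interp (prefix (a + l))"
    using interp_strict_mono prefix_nonneg by (simp add: add_nonneg_nonneg)
  moreover have "interp (prefix a) + interp (prefix l) \<le> interp (prefix a + prefix l)"
    using interp_add prefix_nonneg by blast
  ultimately show False using interp_prefix by simp
qed

lemma prefix_superadd: "prefix l1 + prefix l2 \<le> prefix (l1 + l2 + 1)"
proof (rule ccontr)
  assume "\<not> ?thesis"
  then have "interp (prefix (l1 + l2 + 1)) < interp (prefix l1 + prefix l2)"
    using interp_strict_mono prefix_nonneg by simp
  moreover have "interp (prefix l1 + prefix l2) \<le> interp (prefix l1) + interp (prefix l2) + 1"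
    using interp_add prefix_nonneg by blast
  ultimately show False using interp_prefix by simp
qed

lemma window_le_prefix: "(\<Sum>u\<in>{a<..a + l}. weight u) \<le> prefix l"
proof -
  have "{0<..a + l} = {0<..a} \<union> {a<..a + l}" "{0<..a} \<inter> {a<..a + l} = {}" by auto
  then have "prefix (a + l) = prefix a + (\<Sum>u\<in>{a<..a + l}. weight u)"
    unfolding prefix_def by (simp add: sum.union_disjoint)
  then show ?thesis using prefix_subadd[of a l] by simp
qed

lemma weight_nonneg: "0 \<le> weight u"
  unfolding weight_def by simp

sublocale window_bound weight prefix
  by unfold_locales (rule weight_nonneg window_le_prefix prefix_superadd)+

end

section \<open>The hider strategies\<close>

lemma count_nonmultiples:
  fixes d :: nat
  assumes "0 < d"
  shows "(\<Sum>u\<in>{a<..a + l}. if d dvd u then 0 else 1 :: real)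
    = real l - (real ((a + l) div d) - real (a div d))"
proof (induction l)
  case (Suc l)
  have "{a<..a + Suc l} = insert (Suc (a + l)) {a<..a + l}" by auto
  moreover have "Suc (a + l) div d = (a + l) div d + (if d dvd Suc (a + l) then 1 else 0)"
    using assms by (simp add: div_Suc dvd_eq_mod_eq_0)
  ultimately show ?case using Suc by auto
qed simp

lemma count_nonmultiples_le:
  fixes d :: nat
  assumes "0 < d"
  shows "(\<Sum>u\<in>{a<..a + l}. if d dvd u then 0 else 1 :: real) \<le> real l - real (l div d)"
proof -
  have "a div d + l div d \<le> (a + l) div d" by (rule div_add_bounds(1)[OF assms])
  then have "real (a div d) + real (l div d) \<le> real ((a + l) div d)"
    by (simp only: of_nat_add[symmetric] of_nat_le_iff)
  then show ?thesis unfolding count_nonmultiples[OF assms] by linarith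
qed

lemma nonmultiples_superadd:
  fixes d :: nat
  assumes "0 < d"
  shows "(real l1 - real (l1 div d)) + (real l2 - real (l2 div d))
    \<le> real (l1 + l2 + 1) - real ((l1 + l2 + 1) div d)"
proof -
  have "l1 + l2 + 1 = (l1 mod d + l2 mod d + 1) + (l1 div d * d + l2 div d * d)"
    using div_mult_mod_eq[of l1 d] div_mult_mod_eq[of l2 d] by linarith
  then have "l1 + l2 + 1 = (l1 mod d + l2 mod d + 1) + (l1 div d + l2 div d) * d"
    by (simp only: add_mult_distrib)
  then have split: "(l1 + l2 + 1) div d = l1 div d + l2 div d + (l1 mod d + l2 mod d + 1) div d"
    using div_mult_self1[of d "l1 mod d + l2 mod d + 1" "l1 div d + l2 div d"] assms by simp
  have "l1 mod d + l2 mod d + 1 < 2 * d"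
    using mod_less_divisor[OF assms, of l1] mod_less_divisor[OF assms, of l2] by linarith
  then have "(l1 mod d + l2 mod d + 1) div d < 2"
    by (rule less_mult_imp_div_less)
  with split have "(l1 + l2 + 1) div d \<le> l1 div d + l2 div d + 1" by linarith
  then have "real ((l1 + l2 + 1) div d) \<le> real (l1 div d + l2 div d + 1)"
    by (rule of_nat_mono)
  then show ?thesis by simp
qed

lemma window_bound_nonmultiples:
  fixes d :: nat
  assumes "0 < d"
  shows "window_bound (\<lambda>u. if d dvd u then 0 else 1) (\<lambda>l. real l - real (l div d))"
  by unfold_locales (simp, rule count_nonmultiples_le[OF assms], rule nonmultiples_superadd[OF assms])

lemma y_nc_eq:
  "y_nc n c v = (if gcd c (n - 1) dvd v then 0
     else 1 / (real ((n - 1) div gcd c (n - 1)) * real (gcd c (n - 1) - 1)))"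
  unfolding y_nc_def Let_def by simp

lemma y_nc_in_hider_dists:
  assumes d: "1 < gcd c (n - 1)" and n: "2 \<le> n"
  shows "y_nc n c \<in> hider_dists n"
proof -
  define d where "d = gcd c (n - 1)"
  obtain w where n1: "n - 1 = w * d"
    unfolding d_def by (metis dvd_def gcd_dvd2 mult.commute)
  have d1: "1 < d" and w: "0 < w" using d n n1 unfolding d_def by (auto intro: gr0I)
  have wd: "(n - 1) div d = w" using d1 n1 by simp
  define W where "W = real w * real (d - 1)"
  have "(\<Sum>v<n. if d dvd v then 0 else 1 :: real)
      = (\<Sum>v\<in>{0<..0 + (n - 1)}. if d dvd v then 0 else 1 :: real)"
  proof -
    have "{..<n} = insert 0 {0<..0 + (n - 1)}" using n by auto
    then show ?thesis by simp
  qed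
  also have "\<dots> = real (w * d) - real w"
    using count_nonmultiples[of d 0 "n - 1"] d1 wd n1 by simp
  also have "\<dots> = W"
    unfolding W_def using d1 by (simp add: of_nat_diff algebra_simps)
  finally have count: "(\<Sum>v<n. if d dvd v then 0 else 1 :: real) = W" .
  have y: "y_nc n c v = (if d dvd v then 0 else 1) / W" for v
    unfolding y_nc_eq d_def[symmetric] wd W_def by simp
  have W: "0 < W" unfolding W_def using d1 w by simp
  then have "(\<Sum>v<n. y_nc n c v) = 1"
    unfolding y sum_divide_distrib[symmetric] count by simp
  then show ?thesis unfolding hider_dists_def y using W by simp
qed

lemma hider_payoff_y_nc_le:
  assumes d: "1 < gcd c (n - 1)" and n: "2 \<le> n"
    and T: "T \<in> strategies n k" and k: "2 ^ k - 1 \<le> c + 1"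
  shows "hider_payoff n (y_nc n c) T \<le> real c / real (n - 1)"
proof -
  define d where "d = gcd c (n - 1)"
  define W where "W = real ((n - 1) div d) * real (d - 1)"
  obtain h w where c: "c = h * d" and n1: "n - 1 = w * d"
    unfolding d_def by (metis dvd_def gcd_dvd1 gcd_dvd2 mult.commute)
  have d1: "1 < d" and w: "0 < w" using d n n1 unfolding d_def by (auto intro: gr0I)
  have W: "W = real w * real (d - 1)" unfolding W_def n1 using d1 by simp
  interpret window_bound "\<lambda>u. if d dvd u then 0 else 1" "\<lambda>l. real l - real (l div d)"
    using d1 by (intro window_bound_nonmultiples) simp
  have "hider_payoff n (y_nc n c) T \<le> (real c - real (c div d)) / W"
  proof (rule hider_payoff_le[OF _ _ _ T k])
    show "0 < W" using d1 w W by simp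
    show "y_nc n c v = 0" if "v < n" "\<not> (1 \<le> v \<and> v \<le> n - 2)" for v
    proof -
      have "v = 0 \<or> v = n - 1" using that by linarith
      then show ?thesis using n1 unfolding y_nc_eq d_def[symmetric] by auto
    qed
    show "y_nc n c v = (if d dvd v then 0 else 1) / W" for v
      unfolding y_nc_eq d_def[symmetric] W_def by simp
  qed (use n in simp)
  also have "(real c - real (c div d)) / W = real h / real w"
  proof -
    have "real c - real (c div d) = real h * real (d - 1)"
      using d1 unfolding c by (simp add: of_nat_diff algebra_simps)
    then show ?thesis using d1 unfolding W by simp
  qed
  also have "\<dots> = (real h * real d) / (real w * real d)"
    using d1 by simp
  also have "\<dots> = real c / real (n - 1)"
    unfolding c n1 by simp
  finally show ?thesis .
qed

text \<open>With h (n - 1) = w c + 1, the segments of the construction y_cp are exactly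
  the segments {seg_end j<..seg_end (Suc j)} for p = h, q = c, j < w, and the
  rounding rule of cp_step selects the length seg_len j.\<close>

locale cp_construction = segments h c for h c :: nat +
  fixes n w :: nat
  assumes eq: "h * (n - 1) = w * c + 1" and w_pos: "0 < w" and w_le: "w \<le> n" and n_ge: "3 \<le> n"
begin

definition cp_state :: "nat \<Rightarrow> (nat \<Rightarrow> real) \<times> nat" where
  "cp_state j = ((\<lambda>i. if 1 \<le> i \<and> i \<le> seg_end j then weight i / real w else 0), seg_end j + 1)"

lemma c_pos: "0 < c"
  using p_pos p_le_q by simp

lemma h_n_minus_1: "h * (n - 1) = h * (n - 2) + h"
  using n_ge by (cases n) (auto simp: algebra_simps)

lemma seg_end_w: "seg_end w = n - 2"
proof -
  have "w * c = (h - 1) + (n - 2) * h"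
    using eq h_n_minus_1 p_pos by (simp add: mult.commute)
  moreover have "((h - 1) + (n - 2) * h) div h = (n - 2) + (h - 1) div h"
    using p_pos by (intro div_mult_self1) simp
  ultimately show ?thesis unfolding seg_end_def using p_pos by simp
qed

lemma seg_end_less: "j < w \<Longrightarrow> seg_end j + 1 \<le> n - 2"
proof -
  assume "j < w"
  have "(w - 1) * c + c + 1 = h * (n - 1)"
    using eq w_pos by (cases w) (auto simp: algebra_simps)
  then have "(w - 1) * c < (n - 2) * h"
    using h_n_minus_1 p_le_q by (simp add: mult.commute)
  then have "seg_end (w - 1) < n - 2"
    unfolding seg_end_def using p_pos by (simp add: div_less_iff_less_mult)
  moreover have "seg_end j \<le> seg_end (w - 1)" using \<open>j < w\<close> by (intro seg_end_mono) simp
  ultimately show ?thesis by simp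
qed

lemma seg_len_cases: "seg_len j = c div h \<or> seg_len j = c div h + 1"
proof -
  have "seg_end 1 = c div h" unfolding seg_end_def by simp
  then show ?thesis
    using seg_end_add[of j 1] seg_end_Suc[of j] by auto
qed

lemma cp_state_mass: "(\<Sum>i\<in>{1..<seg_end j + 1}. fst (cp_state j) i) = real j / real w"
proof -
  have "(\<Sum>i\<in>{1..<seg_end j + 1}. fst (cp_state j) i) = (\<Sum>i\<in>{0<..seg_end j}. weight i / real w)"
    unfolding cp_state_def by (intro sum.cong) auto
  also have "\<dots> = prefix (seg_end j) / real w"
    unfolding prefix_def by (simp add: sum_divide_distrib)
  finally show ?thesis by (simp add: prefix_seg_end)
qed

lemma cp_length_test:
  "real (seg_end j + 1 + (c div h + 1) - 1) * (real h / (real w * real c))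
     \<le> real j / real w + 1 / real w
   \<longleftrightarrow> seg_len j = c div h + 1"
proof -
  have pos: "0 < real w * real c" using w_pos c_pos by simp
  have lhs: "real (seg_end j + 1 + (c div h + 1) - 1) * (real h / (real w * real c))
      = real ((seg_end j + 1 + c div h) * h) / (real w * real c)"
    by (simp add: algebra_simps add_divide_distrib)
  have rhs: "real j / real w + 1 / real w = real ((j + 1) * c) / (real w * real c)"
    using w_pos c_pos by (simp add: field_simps)
  have "real ((seg_end j + 1 + c div h) * h) / (real w * real c)
      \<le> real ((j + 1) * c) / (real w * real c)
    \<longleftrightarrow> real ((seg_end j + 1 + c div h) * h) \<le> real ((j + 1) * c)"
    using pos by (simp only: divide_le_cancel) auto
  also have "\<dots> \<longleftrightarrow> (seg_end j + 1 + c div h) * h \<le> (j + 1) * c"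
    by (rule of_nat_le_iff)
  also have "\<dots> \<longleftrightarrow> seg_end j + 1 + c div h \<le> seg_end (Suc j)"
    unfolding seg_end_def using p_pos by (simp add: less_eq_div_iff_mult_less_eq)
  also have "\<dots> \<longleftrightarrow> seg_len j = c div h + 1"
    using seg_end_Suc[of j] seg_len_cases[of j] by auto
  finally show ?thesis by (simp only: lhs rhs)
qed

lemma cp_step_state: "j < w \<Longrightarrow> cp_step n c h w (cp_state j) = cp_state (Suc j)"
proof -
  assume j: "j < w"
  have r: "nat \<lfloor>real c / real h\<rfloor> = c div h" by (simp add: floor_divide_of_nat_eq)
  have len: "(if real (seg_end j + 1 + (c div h + 1) - 1) * (real h / (real w * real c))
      \<le> real j / real w + 1 / real w then c div h + 1 else c div h) = seg_len j"
    unfolding cp_length_test[of j] using seg_len_cases[of j] by auto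
  have fits: "\<not> n - 2 < seg_end j + 1" using seg_end_less[OF j] by simp
  define y where "y = fst (cp_state j)"
  have state: "cp_state j = (y, seg_end j + 1)" unfolding y_def cp_state_def by simp
  have "cp_step n c h w (cp_state j)
    = ((\<lambda>i. if seg_end j + 1 \<le> i \<and> i < seg_end j + 1 + seg_len j
            then 1 / (real (seg_len j) * real w) else y i),
       seg_end j + 1 + seg_len j)"
    unfolding state
    by (simp only: cp_step_def prod.case if_not_P[OF fits] Let_def r
        cp_state_mass[of j, folded y_def] len)
  also have "\<dots> = cp_state (Suc j)"
    unfolding cp_state_def seg_end_Suc[of j] prod.inject
  proof (intro conjI ext)
    fix i
    show "(if seg_end j + 1 \<le> i \<and> i < seg_end j + 1 + seg_len j
          then 1 / (real (seg_len j) * real w) else y i)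
      = (if 1 \<le> i \<and> i \<le> seg_end j + seg_len j then weight i / real w else 0)"
    proof (cases "seg_end j + 1 \<le> i \<and> i < seg_end j + 1 + seg_len j")
      case True
      then have "seg_of i = j" using seg_end_Suc[of j] by (intro seg_of_eq) auto
      then show ?thesis using True seg_len_ge_1[of j] unfolding weight_def by auto
    next
      case False
      then show ?thesis unfolding y_def cp_state_def by auto
    qed
  qed simp
  finally show ?thesis .
qed

lemma y_cp_eq: "y_cp n c h w i = (if 1 \<le> i \<and> i \<le> n - 2 then weight i / real w else 0)"
proof -
  have iter: "(cp_step n c h w ^^ j) (cp_state 0) = cp_state j" if "j \<le> w" for j
    using that by (induction j) (auto simp: cp_step_state)
  have stop: "cp_step n c h w (cp_state w) = cp_state w"
    unfolding cp_state_def cp_step_def using seg_end_w n_ge by simp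
  then have idle: "(cp_step n c h w ^^ t) (cp_state w) = cp_state w" for t
    by (induction t) auto
  have "cp_state 0 = (\<lambda>_. 0, 1)" unfolding cp_state_def by auto
  moreover have "cp_step n c h w ^^ n = (cp_step n c h w ^^ (n - w)) \<circ> (cp_step n c h w ^^ w)"
    using w_le by (metis funpow_add le_add_diff_inverse2)
  ultimately have "(cp_step n c h w ^^ n) (\<lambda>_. 0, 1) = cp_state w"
    using iter[of w] idle by simp
  then show ?thesis unfolding y_cp_def cp_state_def seg_end_w by simp
qed

lemma y_cp_in_hider_dists: "y_cp n c h w \<in> hider_dists n"
proof -
  have "(\<Sum>v<n. y_cp n c h w v) = (\<Sum>v\<in>{0<..n - 2}. weight v / real w)"
    unfolding y_cp_eq by (rule sum.mono_neutral_cong_right) auto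
  also have "\<dots> = prefix (seg_end w) / real w"
    unfolding prefix_def seg_end_w by (simp add: sum_divide_distrib)
  finally have "(\<Sum>v<n. y_cp n c h w v) = 1" using w_pos by (simp add: prefix_seg_end)
  then show ?thesis unfolding hider_dists_def y_cp_eq by (simp add: weight_def)
qed

lemma hider_payoff_y_cp_le:
  assumes "T \<in> strategies n k" "2 ^ k - 1 \<le> c + 1"
  shows "hider_payoff n (y_cp n c h w) T \<le> real h / real w"
proof -
  have "hider_payoff n (y_cp n c h w) T \<le> prefix c / real w"
    by (rule hider_payoff_le[OF _ _ _ assms]) (use w_pos n_ge y_cp_eq in auto)
  then show ?thesis by (simp add: prefix_q)
qed

end

section \<open>The greedy seeker strategy\<close>

lemma intv_start_unique:
  assumes "v < n" "v' < n" "1 \<le> l" "l < n" "l' < n" "intv v l n = intv v' l' n"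
  shows "v = v'"
proof -
  have "v \<in> intv v l n" unfolding intv_def using assms by force
  then obtain z where z: "v' \<le> z" "z < v' + l'" "v = z mod n"
    using assms unfolding intv_def by auto
  show ?thesis
  proof (cases "z = v'")
    case True
    then show ?thesis using z assms by simp
  next
    case False
    then have "(z - 1) mod n \<in> intv v' l' n" unfolding intv_def using z by force
    then have "(z - 1) mod n \<in> intv v l n" using assms(6) by simp
    then obtain z2 where z2: "v \<le> z2" "z2 < v + l" "(z - 1) mod n = z2 mod n"
      unfolding intv_def by auto
    have "(z2 + 1) mod n = (z2 mod n + 1) mod n" by (rule mod_add_left_eq[symmetric])
    also have "\<dots> = ((z - 1) mod n + 1) mod n" using z2(3) by simp
    also have "\<dots> = (z - 1 + 1) mod n" by (rule mod_add_left_eq)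
    also have "\<dots> = v mod n" using False z assms by simp
    finally have "n dvd z2 + 1 - v" using mod_eq_dvd_iff_nat[of v "z2 + 1" n] z2 by simp
    moreover have "0 < z2 + 1 - v" "z2 + 1 - v < n" using z2 assms by auto
    ultimately show ?thesis using dvd_imp_le by fastforce
  qed
qed

lemma mem_intv: "v \<le> z \<Longrightarrow> z < v + l \<Longrightarrow> z mod n \<in> intv v l n"
  unfolding intv_def by auto

lemma cover_target_eq_intv: "\<exists>l. (l = c \<or> l = c + 1) \<and> cover_target n c v = intv v l n"
  unfolding cover_target_def by auto

lemma mem_cover_target: "v \<le> z \<Longrightarrow> z < v + c \<Longrightarrow> z mod n \<in> cover_target n c v"
  unfolding cover_target_def using mem_intv[of v z c] mem_intv[of v z "c + 1"] by auto

lemma mem_cover_target_long: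
  assumes "v \<le> a" "a \<le> v + c" "a mod n \<in> {0, n - 1}" "v \<le> z" "z \<le> v + c"
  shows "z mod n \<in> cover_target n c v"
proof -
  have "cover_target n c v = intv v (c + 1) n"
    unfolding cover_target_def using mem_intv[of v a "c + 1" n] assms(1-3) by auto
  then show ?thesis using mem_intv[of v z "c + 1" n] assms(4,5) by simp
qed

locale search_game =
  fixes n c h w k :: nat and Tv :: "nat \<Rightarrow> strat"
  assumes c_ge: "2 \<le> c" and n_ge: "c + 3 \<le> n" and h_pos: "0 < h"
    and w_pos: "0 < w" and w_le: "w \<le> n - 2"
    and eqn: "h * (n - 1) = w * c + (if gcd c (n - 1) = 1 then 1 else 0)"
    and minimal: "\<And>h' w'. 0 < h' \<Longrightarrow> 0 < w' \<Longrightarrow> w' < w \<Longrightarrow>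
      h' * (n - 1) \<noteq> w' * c + (if gcd c (n - 1) = 1 then 1 else 0)"
    and Tv: "\<And>v. v < n \<Longrightarrow> v \<noteq> 1 \<Longrightarrow> Tv v \<in> strategies n k \<and> C n (Tv v) = cover_target n c v"
    and budget: "2 ^ k - 1 \<le> c + 1"
begin

abbreviation "N \<equiv> n - 1"

lemma N_ge: "c + 2 \<le> N"
  using n_ge by simp

lemma not_dvd_multiple: "0 < j \<Longrightarrow> j < w \<Longrightarrow> \<not> N dvd j * c"
proof
  assume j: "0 < j" "j < w" and dvd: "N dvd j * c"
  show False
  proof (cases "gcd c N = 1")
    case True
    then have "N dvd j" using dvd by (simp add: coprime_dvd_mult_left_iff coprime_iff_gcd_eq_1 gcd.commute)
    then show False using j w_le by (auto dest: dvd_imp_le)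
  next
    case False
    obtain h' where h': "j * c = N * h'" using dvd by (auto elim: dvdE)
    then have "0 < h'" using j c_ge by (cases h') auto
    then show False using minimal[of h' j] j False h' by (simp add: mult.commute)
  qed
qed

lemma not_dvd_Suc_multiple: "0 < j \<Longrightarrow> j < w \<Longrightarrow> \<not> N dvd 1 + j * c"
proof
  assume j: "0 < j" "j < w" and dvd: "N dvd 1 + j * c"
  obtain h' where h': "1 + j * c = N * h'" using dvd by (auto elim: dvdE)
  then have "0 < h'" by (cases h') auto
  show False
  proof (cases "gcd c N = 1")
    case True
    then show False using minimal[of h' j] j \<open>0 < h'\<close> h' by (simp add: mult.commute)
  next
    case False
    have "gcd c N dvd 1 + j * c" using dvd gcd_dvd2 dvd_trans by blast
    then have "gcd c N dvd j * c + 1" by (simp add: add.commute)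
    moreover have "gcd c N dvd j * c" by simp
    ultimately have "gcd c N dvd 1" using dvd_add_right_iff by blast
    then show False using False by simp
  qed
qed

text \<open>The j-th strategy chosen by the greedy algorithm (T_0 for j = 0) is T_(start j).
  Unrolled to the integers, it covers the residues modulo N of {j c<..(j + 1) c}.\<close>

definition start :: "nat \<Rightarrow> nat" where
  "start j = (if j = 0 then 0 else (1 + j * c) mod N)"

lemma greedy_v_eq: "greedy_v n c j = start (j + 1)"
proof (induction j)
  case 0
  then show ?case using N_ge unfolding greedy_v_def start_def by simp
next
  case (Suc j)
  have "greedy_v n c (Suc j) = (greedy_v n c j + c) mod N" unfolding greedy_v_def by simp
  also have "\<dots> = ((1 + (j + 1) * c) mod N + c) mod N" using Suc by (simp add: start_def)
  also have "\<dots> = (1 + (j + 1) * c + c) mod N" by (simp add: mod_add_left_eq)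
  also have "1 + (j + 1) * c + c = 1 + (Suc j + 1) * c" by simp
  finally show ?case unfolding start_def by simp
qed

lemma start_not_0_1:
  assumes "0 < j" "j < w"
  shows "start j \<noteq> 0" and "start j \<noteq> 1"
proof -
  show "start j \<noteq> 0"
    using not_dvd_Suc_multiple[OF assms] assms unfolding start_def by (simp add: dvd_eq_mod_eq_0)
  show "start j \<noteq> 1"
  proof
    assume "start j = 1"
    then have "(1 + j * c) mod N = 1 mod N" using N_ge assms unfolding start_def by simp
    then have "N dvd j * c" using mod_eq_dvd_iff_nat[of 1 "1 + j * c" N] by simp
    then show False using not_dvd_multiple[OF assms] by simp
  qed
qed

lemma start_w_in_0_1: "(1 + w * c) mod N \<in> {0, 1}"
proof (cases "gcd c N = 1")
  case True
  then have "1 + w * c = N * h" using eqn by (simp add: mult.commute)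
  then show ?thesis by simp
next
  case False
  then have "(1 + w * c) mod N = (1 + h * N) mod N" using eqn by (simp add: mult.commute)
  also have "\<dots> = 1 mod N" by (rule mod_mult_self1)
  finally show ?thesis using N_ge by simp
qed

lemma greedy_stop_eq: "greedy_stop n c = w - 1"
  unfolding greedy_stop_def
proof (rule Least_equality)
  show "greedy_v n c (w - 1) \<in> {0, 1}"
    using greedy_v_eq[of "w - 1"] start_w_in_0_1 w_pos unfolding start_def by simp
  show "w - 1 \<le> j" if "greedy_v n c j \<in> {0, 1}" for j
  proof (rule ccontr)
    assume "\<not> w - 1 \<le> j"
    then have "start (j + 1) \<notin> {0, 1}" using start_not_0_1[of "j + 1"] by simp
    then show False using that greedy_v_eq[of j] by simp
  qed
qed

lemma start_less: "start j < n"
proof -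
  have "start j < N" using N_ge unfolding start_def by auto
  then show ?thesis by simp
qed

lemma start_ne_1: "j < w \<Longrightarrow> start j \<noteq> 1"
  using start_not_0_1(2)[of j] unfolding start_def by (cases "j = 0") auto

lemma inj_on_start: "inj_on start {..<w}"
proof -
  have *: "start j \<noteq> start j'" if "j < j'" "j' < w" for j j'
  proof (cases "j = 0")
    case True
    then show ?thesis using start_not_0_1[of j'] that unfolding start_def by auto
  next
    case False
    show ?thesis
    proof
      assume "start j = start j'"
      then have "(1 + j' * c) mod N = (1 + j * c) mod N" using False that unfolding start_def by auto
      then have "N dvd (1 + j' * c) - (1 + j * c)"
        using mod_eq_dvd_iff_nat[of "1 + j * c" "1 + j' * c" N] that by simp
      moreover have "(1 + j' * c) - (1 + j * c) = (j' - j) * c" by (simp add: diff_mult_distrib)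
      ultimately show False using not_dvd_multiple[of "j' - j"] that by simp
    qed
  qed
  show ?thesis
  proof (rule inj_onI)
    fix j j' assume "j \<in> {..<w}" "j' \<in> {..<w}" "start j = start j'"
    then show "j = j'" using *[of j j'] *[of j' j] by (cases j j' rule: linorder_cases) auto
  qed
qed

lemma C_Tv_start: "j < w \<Longrightarrow> C n (Tv (start j)) = cover_target n c (start j)"
  using Tv start_less start_ne_1 by blast

lemma inj_on_Tv: "inj_on Tv (start ` {..<w})"
proof
  fix a b assume a: "a \<in> start ` {..<w}" and b: "b \<in> start ` {..<w}" and "Tv a = Tv b"
  have "a < n" "a \<noteq> 1" "b < n" "b \<noteq> 1" using a b start_less start_ne_1 by auto
  then have "cover_target n c a = cover_target n c b" using Tv \<open>Tv a = Tv b\<close> by metis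
  moreover obtain l where "l = c \<or> l = c + 1" "cover_target n c a = intv a l n"
    using cover_target_eq_intv by blast
  moreover obtain l' where "l' = c \<or> l' = c + 1" "cover_target n c b = intv b l' n"
    using cover_target_eq_intv by blast
  ultimately show "a = b"
    using intv_start_unique[of a n b l l'] \<open>a < n\<close> \<open>b < n\<close> n_ge c_ge by auto
qed

lemma greedy_set_eq: "greedy_set n c Tv = (Tv \<circ> start) ` {..<w}"
proof -
  have "{..<w} = insert 0 (Suc ` {..<w - 1})"
  proof (intro equalityI subsetI)
    fix j assume "j \<in> {..<w}"
    then show "j \<in> insert 0 (Suc ` {..<w - 1})" by (cases j) auto
  qed (use w_pos in auto)
  then have "(Tv \<circ> start) ` {..<w} = insert (Tv (start 0)) {Tv (start (j + 1)) | j. j < w - 1}"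
    by auto
  moreover have "start 0 = 0" unfolding start_def by simp
  ultimately show ?thesis
    unfolding greedy_set_def greedy_stop_eq greedy_v_eq by simp
qed

lemma card_greedy_set: "card (greedy_set n c Tv) = w"
  unfolding greedy_set_eq using card_image[OF comp_inj_on[OF inj_on_start inj_on_Tv]] by simp

lemma greedy_set_subset: "greedy_set n c Tv \<subseteq> strategies n k"
  unfolding greedy_set_eq using Tv start_less start_ne_1 by auto

lemma greedy_x_eq: "greedy_x n c Tv T = (if T \<in> greedy_set n c Tv then 1 / real w else 0)"
  unfolding greedy_x_def card_greedy_set by simp

lemma greedy_x_in_seeker_dists: "greedy_x n c Tv \<in> seeker_dists n k"
proof -
  have "(\<Sum>T\<in>strategies n k. greedy_x n c Tv T) = (\<Sum>T\<in>greedy_set n c Tv. 1 / real w)"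
    unfolding greedy_x_eq using finite_strategies greedy_set_subset
    by (intro sum.mono_neutral_cong_right) auto
  also have "\<dots> = 1" using card_greedy_set w_pos by simp
  finally show ?thesis unfolding seeker_dists_def greedy_x_eq by simp
qed

definition covering :: "nat \<Rightarrow> nat set" where
  "covering u = {j. j < w \<and> u \<in> cover_target n c (start j)}"

lemma seeker_payoff_greedy_x: "seeker_payoff n k (greedy_x n c Tv) u = real (card (covering u)) / real w"
proof -
  have "{T \<in> greedy_set n c Tv. u \<in> C n T} = (Tv \<circ> start) ` covering u"
    unfolding greedy_set_eq covering_def using C_Tv_start by auto
  moreover have "inj_on (Tv \<circ> start) (covering u)"
    using comp_inj_on[OF inj_on_start inj_on_Tv] by (rule inj_on_subset) (auto simp: covering_def)
  ultimately have card: "card {T \<in> greedy_set n c Tv. u \<in> C n T} = card (covering u)"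
    by (simp only: card_image)
  have "seeker_payoff n k (greedy_x n c Tv) u = (\<Sum>T\<in>{T \<in> greedy_set n c Tv. u \<in> C n T}. 1 / real w)"
    unfolding seeker_payoff_def greedy_x_eq using finite_strategies greedy_set_subset
    by (intro sum.mono_neutral_cong_right) auto
  then show ?thesis using card by simp
qed

text \<open>Vertex u is the residue of u + i N for every i, and the integer u + i N
  lies in the unrolled range of the greedy strategy number block (u + i N).\<close>

definition block :: "nat \<Rightarrow> nat" where
  "block x = (x - 1) div c"

lemma block_bounds:
  assumes "1 \<le> x"
  shows "block x * c < x" and "x \<le> (block x + 1) * c"
proof -
  have "x - 1 = block x * c + (x - 1) mod c" unfolding block_def by simp
  moreover have "(x - 1) mod c < c" using c_ge by simp
  ultimately show "block x * c < x" "x \<le> (block x + 1) * c"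
    using assms by (simp_all add: algebra_simps)
qed

lemma block_less: "1 \<le> x \<Longrightarrow> x \<le> m * c \<Longrightarrow> block x < m"
  unfolding block_def using c_ge by (simp add: div_less_iff_less_mult)

lemma block_ge_1: "c + 1 \<le> x \<Longrightarrow> 1 \<le> block x"
  unfolding block_def using c_ge by (simp add: less_eq_div_iff_mult_less_eq)

lemma block_ne:
  assumes "1 \<le> x" "x + N \<le> x'"
  shows "block x \<noteq> block x'"
proof
  assume eq: "block x = block x'"
  have "block x * c < x" using block_bounds assms by simp
  moreover have "x' \<le> (block x' + 1) * c" using block_bounds assms by simp
  ultimately have "x' < x + c" using eq by (simp add: algebra_simps)
  then show False using assms N_ge by simp
qed

lemma block_multiple_ne:
  assumes "1 \<le> i" "1 \<le> i'" "i \<noteq> i'"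
  shows "block (i * N) \<noteq> block (i' * N)"
proof -
  have *: "block (i * N) \<noteq> block (i' * N)" if "1 \<le> i" "i < i'" for i i'
  proof -
    have "Suc i * N \<le> i' * N" using that(2) by (intro mult_le_mono1) simp
    then have "i * N + N \<le> i' * N" by simp
    moreover have "1 \<le> i * N" using that(1) N_ge by simp
    ultimately show ?thesis using block_ne by simp
  qed
  show ?thesis using *[of i i'] *[of i' i] assms by (cases "i < i'") auto
qed

lemma covers_interior:
  assumes j: "j < w" and x: "j * c < x" "x \<le> (j + 1) * c"
    and u: "1 \<le> u" "u \<le> n - 2" and xu: "x mod N = u"
  shows "j \<in> covering u"
proof (cases "j = 0")
  case True
  then have "x = u" "u \<le> c" using x xu N_ge by simp_all
  then have "u mod n \<in> cover_target n c 0"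
    using mem_cover_target_long[where v = 0 and a = 0 and z = u and n = n and c = c] by simp
  then show ?thesis using True j u unfolding covering_def start_def by simp
next
  case False
  define v where "v = start j"
  have v: "v = (1 + j * c) mod N" using False unfolding v_def start_def by simp
  have "v < N" using v N_ge by simp
  define t where "t = x - (1 + j * c)"
  have t: "x = (1 + j * c) + t" "t < c" using x unfolding t_def by (simp_all add: algebra_simps)
  have vt: "(v + t) mod N = u" using xu unfolding t(1) v by (simp add: mod_add_left_eq)
  have "u \<in> cover_target n c v"
  proof (cases "v + t < N")
    case True
    then show ?thesis using vt mem_cover_target[of v "v + t" c n] t(2) N_ge by simp
  next
    case False
    have "v + t < 2 * N" using \<open>v < N\<close> t(2) N_ge by simp
    then have "(v + t) mod N = v + t - N" using False by (simp add: le_mod_geq)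
    then have "u = v + t + 1 - n" using vt False N_ge by simp
    moreover have "(v + t + 1) mod n = (v + t + 1 - n) mod n"
      using False N_ge by (simp add: le_mod_geq)
    ultimately have "(v + t + 1) mod n = u" using u N_ge by simp
    moreover have "(v + t + 1) mod n \<in> cover_target n c v"
      using mem_cover_target_long[where v = v and a = n and z = "v + t + 1" and n = n and c = c]
        False \<open>v < N\<close> t(2) by simp
    ultimately show ?thesis by simp
  qed
  then show ?thesis using j unfolding covering_def v_def by simp
qed

lemma covers_ends:
  assumes j: "0 < j" "j < w" and x: "j * c < x" "x \<le> (j + 1) * c" and x0: "x mod N = 0"
  shows "j \<in> covering 0" and "j \<in> covering (n - 1)"
proof -
  define v where "v = start j"
  have v: "v = (1 + j * c) mod N" using j unfolding v_def start_def by simp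
  have "v < N" using v N_ge by simp
  have "v \<noteq> 0" using start_not_0_1[OF j] unfolding v_def by simp
  define t where "t = x - (1 + j * c)"
  have t: "x = (1 + j * c) + t" "t < c" using x unfolding t_def by (simp_all add: algebra_simps)
  have vt: "(v + t) mod N = 0" using x0 unfolding t(1) v by (simp add: mod_add_left_eq)
  have "v + t = N"
  proof (rule ccontr)
    assume "v + t \<noteq> N"
    moreover have "v + t < 2 * N" using \<open>v < N\<close> t(2) N_ge by simp
    ultimately show False using vt \<open>v \<noteq> 0\<close>
      by (cases "v + t < N") (auto simp: le_mod_geq)
  qed
  have long: "z mod n \<in> cover_target n c v" if "v \<le> z" "z \<le> v + c" for z
    using mem_cover_target_long[where v = v and a = n and z = z and n = n and c = c]
      that \<open>v + t = N\<close> t(2) by simp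
  have "(v + t + 1) mod n = 0" "(v + t) mod n = n - 1" using \<open>v + t = N\<close> N_ge by simp_all
  then show "j \<in> covering 0" "j \<in> covering (n - 1)"
    using long[of "v + t + 1"] long[of "v + t"] t(2) j unfolding covering_def v_def by auto
qed

lemma w_ge_2: "2 \<le> w"
proof (rule ccontr)
  assume "\<not> 2 \<le> w"
  then have "w = 1" using w_pos by simp
  then have "h * N \<le> c + 1" using eqn by (simp split: if_splits)
  moreover have "N \<le> h * N" using h_pos by simp
  ultimately show False using N_ge by linarith
qed

lemma covers_last_coprime:
  assumes "gcd c N = 1"
  shows "w - 1 \<in> covering (n - 1)"
proof -
  have "1 + (w - 1) * c + c = h * N"
    using eqn assms w_ge_2 by (cases w) (auto simp: algebra_simps)
  moreover have "h * N = (h - 1) * N + N" using h_pos by (cases h) auto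
  moreover have "N - c + c = N" using N_ge by simp
  ultimately have "1 + (w - 1) * c = (h - 1) * N + (N - c)" by linarith
  then have "(1 + (w - 1) * c) mod N = (N - c) mod N" by (simp only: mod_mult_self3)
  then have "start (w - 1) = N - c"
    unfolding start_def using w_ge_2 N_ge c_ge by simp
  moreover have "N mod n \<in> cover_target n c (N - c)"
    using mem_cover_target_long[where v = "N - c" and a = N and z = N and n = n and c = c] N_ge
    by simp
  ultimately show ?thesis unfolding covering_def using w_pos N_ge by simp
qed

lemma covering_0: "0 \<in> covering 0"
  using mem_cover_target[of 0 0] c_ge w_pos unfolding covering_def start_def by simp

lemma multiple_le_wc: "i < h \<Longrightarrow> i * N + N \<le> w * c + 1"
proof -
  assume "i < h"
  then have "Suc i * N \<le> h * N" by (intro mult_le_mono1) simp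
  then show ?thesis using eqn by (simp split: if_splits)
qed

lemma block_multiple_covers_ends:
  assumes "1 \<le> i" "i * N \<le> w * c"
  shows "block (i * N) \<in> covering 0" and "block (i * N) \<in> covering (n - 1)"
    and "1 \<le> block (i * N)"
proof -
  have "1 * N \<le> i * N" using assms(1) by (intro mult_le_mono1)
  then have xN: "N \<le> i * N" by simp
  then have x1: "1 \<le> i * N" using N_ge by simp
  have "c + 1 \<le> i * N" using xN N_ge by linarith
  then show b1: "1 \<le> block (i * N)" by (rule block_ge_1)
  have "block (i * N) < w" using block_less[OF x1 assms(2)] .
  then show "block (i * N) \<in> covering 0" "block (i * N) \<in> covering (n - 1)"
    using covers_ends[of "block (i * N)" "i * N"] block_bounds[OF x1] b1 by simp_all
qed

lemma card_covering_interior: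
  assumes u: "1 \<le> u" "u \<le> n - 2"
  shows "h \<le> card (covering u)"
proof -
  define f where "f i = block (u + i * N)" for i
  have "f i \<noteq> f i'" if "i < i'" for i i'
  proof -
    have "Suc i * N \<le> i' * N" using that by (intro mult_le_mono1) simp
    then show ?thesis using block_ne[of "u + i * N" "u + i' * N"] u unfolding f_def by simp
  qed
  then have "inj_on f {..<h}"
    by (intro inj_onI) (metis linorder_neqE_nat)
  moreover have "f i \<in> covering u" if i: "i < h" for i
  proof -
    define x where "x = u + i * N"
    have x1: "1 \<le> x" using u unfolding x_def by simp
    have "x \<le> w * c" using multiple_le_wc[OF i] u N_ge unfolding x_def by linarith
    then have "block x < w" by (rule block_less[OF x1])
    moreover have "x mod N = u" using u N_ge unfolding x_def by simp
    ultimately show ?thesis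
      using covers_interior[of "block x" x u] block_bounds[OF x1] u
      unfolding f_def x_def by (simp add: algebra_simps)
  qed
  moreover have "finite (covering u)" unfolding covering_def by simp
  ultimately show ?thesis using card_inj_on_le[of f "{..<h}" "covering u"] by auto
qed

lemma card_covering_ends_not_coprime:
  assumes u: "u = 0 \<or> u = n - 1" and "gcd c N \<noteq> 1"
  shows "h \<le> card (covering u)"
proof -
  have hN: "h * N = w * c" using eqn assms(2) by simp
  define f where "f i = block ((i + 1) * N)" for i
  have "inj_on f {..<h}"
  proof (rule inj_onI)
    fix i i' assume "f i = f i'"
    then show "i = i'" using block_multiple_ne[of "i + 1" "i' + 1"] unfolding f_def by auto
  qed
  moreover have "f i \<in> covering u" if "i < h" for i
  proof -
    have "Suc i * N \<le> h * N" using that by (intro mult_le_mono1) simp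
    then show ?thesis
      using block_multiple_covers_ends[of "i + 1"] hN u unfolding f_def by auto
  qed
  moreover have "finite (covering u)" unfolding covering_def by simp
  ultimately show ?thesis using card_inj_on_le[of f "{..<h}" "covering u"] by auto
qed

text \<open>In the coprime case the multiples of N below w c + 1 yield only h - 1 strategies
  through the end vertices; the missing one is T_0 for vertex 0 and the last strategy
  for vertex n - 1.\<close>

lemma card_covering_ends_coprime:
  assumes u: "u = 0 \<or> u = n - 1" and cp: "gcd c N = 1"
  shows "h \<le> card (covering u)"
proof -
  define j0 where "j0 = (if u = 0 then 0 else w - 1)"
  have j0: "j0 \<in> covering u"
    using covering_0 covers_last_coprime[OF cp] u unfolding j0_def by auto
  have small: "i * N \<le> (w - 1) * c" if "i < h" for i
  proof -
    have "(w - 1) * c + c = w * c" using w_pos by (cases w) auto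
    then show ?thesis using multiple_le_wc[OF that] eqn cp N_ge by simp
  qed
  have ends: "block (i * N) \<in> covering u" "1 \<le> block (i * N)" "block (i * N) < w - 1"
    if "1 \<le> i" "i < h" for i
  proof -
    have "(w - 1) * c \<le> w * c" by (intro mult_le_mono1) simp
    then have "i * N \<le> w * c" using small[OF that(2)] by linarith
    then show "block (i * N) \<in> covering u" "1 \<le> block (i * N)"
      using block_multiple_covers_ends[OF that(1)] u by auto
    show "block (i * N) < w - 1"
      using block_less small[OF that(2)] that(1) N_ge by (simp add: Suc_le_eq)
  qed
  define f where "f i = (if i = 0 then j0 else block (i * N))" for i
  have j0_ne: "block (i * N) \<noteq> j0" if "1 \<le> i" "i < h" for i
    using ends(2,3)[OF that] unfolding j0_def by auto
  have "inj_on f {..<h}"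
  proof (rule inj_onI)
    fix i i' assume "i \<in> {..<h}" "i' \<in> {..<h}" "f i = f i'"
    then show "i = i'"
      using j0_ne[of i] j0_ne[of i'] block_multiple_ne[of i i'] unfolding f_def
      by (cases "i = 0"; cases "i' = 0") auto
  qed
  moreover have "f i \<in> covering u" if "i < h" for i
    using j0 ends[of i] that unfolding f_def by auto
  moreover have "finite (covering u)" unfolding covering_def by simp
  ultimately show ?thesis using card_inj_on_le[of f "{..<h}" "covering u"] by auto
qed

lemma greedy_payoff_ge: "u < n \<Longrightarrow> real h / real w \<le> seeker_payoff n k (greedy_x n c Tv) u"
proof -
  assume "u < n"
  have "h \<le> card (covering u)"
  proof (cases "1 \<le> u \<and> u \<le> n - 2")
    case True
    then show ?thesis using card_covering_interior by simp
  next
    case False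
    then have "u = 0 \<or> u = n - 1" using \<open>u < n\<close> by linarith
    then show ?thesis using card_covering_ends_coprime card_covering_ends_not_coprime by blast
  qed
  then show ?thesis
    unfolding seeker_payoff_greedy_x using w_pos by (simp add: divide_right_mono)
qed

lemma h_le_c_coprime: "gcd c N = 1 \<Longrightarrow> h \<le> c"
proof (rule ccontr)
  assume cp: "gcd c N = 1" and "\<not> h \<le> c"
  then have "(c + 1) * N \<le> h * N" by (intro mult_le_mono1) simp
  moreover have "w * c \<le> (n - 2) * c" using w_le by (rule mult_le_mono1)
  moreover have "(c + 1) * N = (n - 2) * c + c + N"
    using n_ge by (cases n) (auto simp: algebra_simps)
  moreover have "h * N = w * c + 1" using eqn cp by simp
  ultimately show False using N_ge by linarith
qed

lemma optimal_hider:
  obtains y where "y \<in> hider_dists n"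
    and "\<And>T. T \<in> strategies n k \<Longrightarrow> hider_payoff n y T \<le> real h / real w"
    and "1 < gcd c N \<Longrightarrow> y = y_nc n c" and "gcd c N = 1 \<Longrightarrow> y = y_cp n c h w"
proof (cases "gcd c N = 1")
  case True
  interpret cp_construction h c n w
    using h_pos h_le_c_coprime[OF True] eqn True w_pos w_le n_ge by unfold_locales auto
  show ?thesis
    by (rule that[of "y_cp n c h w"])
      (use y_cp_in_hider_dists hider_payoff_y_cp_le budget True in auto)
next
  case False
  then have gcd: "1 < gcd c N" using c_ge by (cases "gcd c N") auto
  have "real (h * N) = real (w * c)" using eqn False by simp
  then have "real c / real N = real h / real w"
    using w_pos N_ge by (simp add: frac_eq_eq)
  moreover have "2 \<le> n" using n_ge by simp
  ultimately show ?thesis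
    by (intro that[of "y_nc n c"])
      (use y_nc_in_hider_dists[OF gcd] hider_payoff_y_nc_le[OF gcd] budget gcd in auto)
qed

end

section \<open>Value of the game\<close>

lemma weak_duality:
  assumes x: "x \<in> seeker_dists n k" and y: "y \<in> hider_dists n" and n: "0 < n"
  shows "Min (seeker_payoff n k x ` {..<n}) \<le> Max (hider_payoff n y ` strategies n k)"
proof -
  let ?S = "strategies n k"
  define m where "m = Min (seeker_payoff n k x ` {..<n})"
  define M where "M = Max (hider_payoff n y ` ?S)"
  have x0: "\<And>T. T \<in> ?S \<Longrightarrow> 0 \<le> x T" and x1: "(\<Sum>T\<in>?S. x T) = 1"
    using x unfolding seeker_dists_def by auto
  have y0: "\<And>v. v < n \<Longrightarrow> 0 \<le> y v" and y1: "(\<Sum>v<n. y v) = 1"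
    using y unfolding hider_dists_def by auto
  have m: "m \<le> seeker_payoff n k x v" if "v < n" for v
    unfolding m_def using that by (intro Min_le) auto
  have M: "hider_payoff n y T \<le> M" if "T \<in> ?S" for T
    unfolding M_def using that finite_strategies by (intro Max_ge) auto
  have "m = (\<Sum>v<n. y v * m)" using y1 by (simp add: sum_distrib_right[symmetric])
  also have "\<dots> \<le> (\<Sum>v<n. y v * seeker_payoff n k x v)"
    by (intro sum_mono mult_left_mono m y0) auto
  also have "\<dots> = (\<Sum>v<n. \<Sum>T\<in>?S. if v \<in> C n T then y v * x T else 0)"
    unfolding seeker_payoff_def sum.inter_filter[OF finite_strategies, symmetric]
    by (simp add: sum_distrib_left if_distrib cong: if_cong)
  also have "\<dots> = (\<Sum>T\<in>?S. \<Sum>v<n. if v \<in> C n T then y v * x T else 0)"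
    by (rule sum.swap)
  also have "\<dots> = (\<Sum>T\<in>?S. x T * hider_payoff n y T)"
  proof (rule sum.cong[OF refl])
    fix T assume "T \<in> ?S"
    then have "{..<n} \<inter> C n T = C n T" using C_subset_vertices[OF _ n] by auto
    then have "(\<Sum>v<n. if v \<in> C n T then y v * x T else 0) = (\<Sum>v\<in>C n T. y v) * x T"
      unfolding sum.inter_restrict[OF finite_lessThan, symmetric] sum_distrib_right by simp
    then show "(\<Sum>v<n. if v \<in> C n T then y v * x T else 0) = x T * hider_payoff n y T"
      unfolding hider_payoff_def by simp
  qed
  also have "\<dots> \<le> (\<Sum>T\<in>?S. x T * M)"
    by (intro sum_mono mult_left_mono M x0)
  also have "\<dots> = M" using x1 by (simp add: sum_distrib_right[symmetric])
  finally show ?thesis unfolding m_def M_def .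
qed

lemma game_value_eq:
  assumes x: "x \<in> seeker_dists n k" and y: "y \<in> hider_dists n" and n: "0 < n"
    and seeker: "\<And>v. v < n \<Longrightarrow> V \<le> seeker_payoff n k x v"
    and hider: "\<And>T. T \<in> strategies n k \<Longrightarrow> hider_payoff n y T \<le> V"
  shows "Min (seeker_payoff n k x ` {..<n}) = V" and "Max (hider_payoff n y ` strategies n k) = V"
    and "lower_value n k = V" and "upper_value n k = V"
proof -
  have "V \<le> Min (seeker_payoff n k x ` {..<n})" using seeker n by (subst Min_ge_iff) auto
  moreover have "Max (hider_payoff n y ` strategies n k) \<le> V"
    using hider finite_strategies[of n k] Leaf_in_strategies[of n k] by (subst Max_le_iff) auto
  moreover note weak_duality[OF x y n]
  ultimately show min: "Min (seeker_payoff n k x ` {..<n}) = V"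
    and max: "Max (hider_payoff n y ` strategies n k) = V" by linarith+
  show "lower_value n k = V"
    unfolding lower_value_def
  proof (rule cSup_eq_maximum)
    show "V \<in> (\<lambda>x. Min (seeker_payoff n k x ` {..<n})) ` seeker_dists n k"
      using x min by (metis image_eqI)
    show "z \<le> V" if "z \<in> (\<lambda>x. Min (seeker_payoff n k x ` {..<n})) ` seeker_dists n k" for z
      using that weak_duality[OF _ y n] max by auto
  qed
  show "upper_value n k = V"
    unfolding upper_value_def
  proof (rule cInf_eq_minimum)
    show "V \<in> (\<lambda>y. Max (hider_payoff n y ` strategies n k)) ` hider_dists n"
      using y max by (metis image_eqI)
    show "V \<le> z" if "z \<in> (\<lambda>y. Max (hider_payoff n y ` strategies n k)) ` hider_dists n" for z
      using that weak_duality[OF x _ n] min by auto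
  qed
qed

lemma int_equation_iff:
  assumes "0 < n"
  shows "int h * (int n - 1) - int w * int c = int e \<longleftrightarrow> h * (n - 1) = w * c + e"
proof -
  have "int h * (int n - 1) - int w * int c = int (h * (n - 1)) - int (w * c)"
    using assms by (simp add: of_nat_diff)
  then show ?thesis by linarith
qed

theorem theorem3p2:
  fixes k n c h w :: nat and Tv :: "nat \<Rightarrow> strat"
  assumes "2 \<le> k" and "2 ^ k < n" and "c = 2 ^ k - 2"
    and "0 < h" and "0 < w" and "w \<le> n - 2"
    and "int h * (int n - 1) - int w * int c = (if gcd c (n - 1) = 1 then 1 else 0)"
    and "\<forall>h' w'. 0 < h' \<and> 0 < w' \<and> w' < w \<longrightarrow>
           int h' * (int n - 1) - int w' * int c \<noteq> (if gcd c (n - 1) = 1 then 1 else 0)"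
    and "\<forall>v<n. v \<noteq> 1 \<longrightarrow> Tv v \<in> strategies n k \<and> C n (Tv v) = cover_target n c v"
  shows "lower_value n k = real h / real w \<and> upper_value n k = real h / real w
    \<and> greedy_x n c Tv \<in> seeker_dists n k
    \<and> Min (seeker_payoff n k (greedy_x n c Tv) ` {..<n}) = real h / real w
    \<and> (gcd c (n - 1) > 1 \<longrightarrow> y_nc n c \<in> hider_dists n
         \<and> Max (hider_payoff n (y_nc n c) ` strategies n k) = real h / real w)
    \<and> (gcd c (n - 1) = 1 \<longrightarrow> y_cp n c h w \<in> hider_dists n
         \<and> Max (hider_payoff n (y_cp n c h w) ` strategies n k) = real h / real w)"
proof -
  have "4 \<le> (2::nat) ^ k" using power_increasing[OF assms(1), of "2::nat"] by simp
  then have c: "2 \<le> c" "c + 3 \<le> n" "2 ^ k - 1 \<le> c + 1" using assms(2,3) by auto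
  then have n: "0 < n" by simp
  have e: "(if gcd c (n - 1) = 1 then 1 else 0) = int (if gcd c (n - 1) = 1 then 1 else 0)"
    by simp
  interpret search_game n c h w k Tv
  proof
    show "h * (n - 1) = w * c + (if gcd c (n - 1) = 1 then 1 else 0)"
      using assms(7)[unfolded e] int_equation_iff[OF n] by blast
    show "\<And>h' w'. 0 < h' \<Longrightarrow> 0 < w' \<Longrightarrow> w' < w \<Longrightarrow>
        h' * (n - 1) \<noteq> w' * c + (if gcd c (n - 1) = 1 then 1 else 0)"
      using assms(8)[unfolded e] by (simp add: int_equation_iff[OF n])
  qed (use c assms(4-6,9) in auto)
  obtain y where y: "y \<in> hider_dists n" "\<And>T. T \<in> strategies n k \<Longrightarrow> hider_payoff n y T \<le> real h / real w"
    and y_nc: "1 < gcd c (n - 1) \<Longrightarrow> y = y_nc n c" and y_cp: "gcd c (n - 1) = 1 \<Longrightarrow> y = y_cp n c h w"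
    by (rule optimal_hider) blast
  note game = game_value_eq[OF greedy_x_in_seeker_dists y(1) n greedy_payoff_ge y(2)]
  show ?thesis using game greedy_x_in_seeker_dists y(1) y_nc y_cp by auto
qed

end
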